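(* Let $\mathcal{H}$ be a finite family of digraphs, $h=\max_{H\in\mathcal{H}}|V(H)|$, and let $p\ge1$ be an integer. If $H^*\in\mathcal{H}^-_p$, then $|V(H^* )|\le h+(p-1)h^2$.
   Context: For a digraph $H$, $GPC(H)$ (good path completions) is the set of strongly connected digraphs of the form $H\cup P_1\cup\dots\cup P_\ell$ (union of vertex and arc sets), where each $P_i$ is a directed path with both end-points in $V(H)$ and the ordered pairs of end-points of the $P_i$ are pairwise distinct; $\{P_1,\dots,P_\ell\}$ is a witnessing collection of paths. $GPC(\mathcal{H})=\bigcup_{H\in\mathcal{H}}GPC(H)$. $\mathcal{H}^-_p$ is the set of digraphs in $GPC(\mathcal{H})$ that admit (for some $H\in\mathcal{H}$) a witnessing collection of paths all of length at most $p-1$, and $\mathcal{H}^+_p=GPC(\mathcal{H})\setminus\mathcal{H}^-_p$. *)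

theory Defs
  imports Main
begin

type_synonym 'a digraph = "'a set \<times> ('a \<times> 'a) set"

definition verts :: "'a digraph \<Rightarrow> 'a set" where "verts G = fst G"
definition arcs :: "'a digraph \<Rightarrow> ('a \<times> 'a) set" where "arcs G = snd G"

definition is_digraph :: "'a digraph \<Rightarrow> bool" where
  "is_digraph G \<longleftrightarrow> finite (verts G) \<and> arcs G \<subseteq> verts G \<times> verts G
     \<and> (\<forall>v. (v, v) \<notin> arcs G)"

definition strongly_connected :: "'a digraph \<Rightarrow> bool" where
  "strongly_connected G \<longleftrightarrow> (\<forall>u\<in>verts G. \<forall>v\<in>verts G. (u, v) \<in> (arcs G)\<^sup>*)"

definition is_dpath :: "'a list \<Rightarrow> bool" where
  "is_dpath P \<longleftrightarrow> P \<noteq> [] \<and> distinct P"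

definition path_verts :: "'a list \<Rightarrow> 'a set" where "path_verts P = set P"

definition path_arcs :: "'a list \<Rightarrow> ('a \<times> 'a) set" where
  "path_arcs P = {(P ! i, P ! Suc i) | i. Suc i < length P}"

definition path_len :: "'a list \<Rightarrow> nat" where "path_len P = length P - 1"

definition path_ends :: "'a list \<Rightarrow> 'a \<times> 'a" where "path_ends P = (hd P, last P)"

definition path_union :: "'a digraph \<Rightarrow> 'a list list \<Rightarrow> 'a digraph" where
  "path_union H Ps = (verts H \<union> (\<Union>P\<in>set Ps. path_verts P),
                      arcs H \<union> (\<Union>P\<in>set Ps. path_arcs P))"

definition witnessing :: "'a digraph \<Rightarrow> 'a list list \<Rightarrow> 'a digraph \<Rightarrow> bool" where
  "witnessing H Ps G \<longleftrightarrow>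
     (\<forall>P\<in>set Ps. is_dpath P \<and> hd P \<in> verts H \<and> last P \<in> verts H)
     \<and> distinct (map path_ends Ps)
     \<and> G = path_union H Ps
     \<and> strongly_connected G"

definition GPC :: "'a digraph \<Rightarrow> 'a digraph set" where
  "GPC H = {G. \<exists>Ps. witnessing H Ps G}"

definition GPC_fam :: "'a digraph set \<Rightarrow> 'a digraph set" where
  "GPC_fam \<H> = (\<Union>H\<in>\<H>. GPC H)"

definition H_minus :: "'a digraph set \<Rightarrow> nat \<Rightarrow> 'a digraph set" where
  "H_minus \<H> p = {G. \<exists>H\<in>\<H>. \<exists>Ps. witnessing H Ps G \<and> (\<forall>P\<in>set Ps. path_len P \<le> p - 1)}"

definition H_plus :: "'a digraph set \<Rightarrow> nat \<Rightarrow> 'a digraph set" where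
  "H_plus \<H> p = GPC_fam \<H> - H_minus \<H> p"

end

theory Submission
  imports Defs
begin

text \<open>A path of length at most \<open>p - 1\<close> starting in \<open>V(H)\<close> contributes at most \<open>p - 1\<close>
  vertices outside \<open>V(H)\<close>, namely among its vertices after the first. Since the ordered pairs
  of end-points are distinct and lie in \<open>V(H) \<times> V(H)\<close>, there are at most \<open>|V(H)|\<^sup>2\<close> paths.\<close>

lemma card_set_diff_le_path_len:
  assumes "P \<noteq> []" and "hd P \<in> V"
  shows "card (set P - V) \<le> path_len P"
proof -
  have "set P - V \<subseteq> set (tl P)"
    using assms by (cases P) auto
  then have "card (set P - V) \<le> card (set (tl P))"
    by (simp add: card_mono)
  also have "\<dots> \<le> length (tl P)"
    by (rule card_length)
  finally show ?thesis
    by (simp add: path_len_def)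
qed

lemma verts_path_union:
  "verts (path_union H Ps) = verts H \<union> (\<Union>P\<in>set Ps. set P - verts H)"
  by (auto simp: path_union_def verts_def path_verts_def)

lemma length_le_card_square_if_distinct_ends:
  assumes "finite V"
    and "distinct (map path_ends Ps)"
    and "\<forall>P\<in>set Ps. hd P \<in> V \<and> last P \<in> V"
  shows "length Ps \<le> (card V)\<^sup>2"
proof -
  have "length Ps = card (set (map path_ends Ps))"
    using distinct_card[OF assms(2)] by simp
  also have "\<dots> \<le> card (V \<times> V)"
    using assms(1,3) by (intro card_mono) (auto simp: path_ends_def)
  also have "\<dots> = (card V)\<^sup>2"
    by (simp add: card_cartesian_product power2_eq_square)
  finally show ?thesis .
qed

lemma card_verts_le_if_witnessing:
  assumes "witnessing H Ps G"
    and "finite (verts H)"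
    and "\<forall>P\<in>set Ps. path_len P \<le> k"
  shows "card (verts G) \<le> card (verts H) + k * (card (verts H))\<^sup>2"
proof -
  have paths: "\<forall>P\<in>set Ps. is_dpath P \<and> hd P \<in> verts H \<and> last P \<in> verts H"
    and ends: "distinct (map path_ends Ps)"
    and G: "G = path_union H Ps"
    using assms(1) by (auto simp: witnessing_def)
  have "card (\<Union>P\<in>set Ps. set P - verts H) \<le> (\<Sum>P\<in>set Ps. card (set P - verts H))"
    by (rule card_UN_le) simp
  also have "\<dots> \<le> (\<Sum>P\<in>set Ps. k)"
    using paths assms(3)
    by (intro sum_mono order.trans[OF card_set_diff_le_path_len]) (auto simp: is_dpath_def)
  also have "\<dots> \<le> length Ps * k"
    by (simp add: card_length)
  also have "\<dots> \<le> (card (verts H))\<^sup>2 * k"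
    using length_le_card_square_if_distinct_ends[OF assms(2) ends] paths by simp
  finally have "card (\<Union>P\<in>set Ps. set P - verts H) \<le> k * (card (verts H))\<^sup>2"
    by (simp add: mult.commute)
  moreover have "card (verts G) \<le> card (verts H) + card (\<Union>P\<in>set Ps. set P - verts H)"
    unfolding G verts_path_union by (rule card_Un_le)
  ultimately show ?thesis
    by linarith
qed

theorem lemma21:
  fixes \<H> :: "'a digraph set" and p :: nat and Hs :: "'a digraph"
  assumes "finite \<H>"
    and "\<forall>H\<in>\<H>. is_digraph H"
    and "p \<ge> 1"
    and "Hs \<in> H_minus \<H> p"
  shows "card (verts Hs) \<le> Max ((\<lambda>H. card (verts H)) ` \<H>)
           + (p - 1) * (Max ((\<lambda>H. card (verts H)) ` \<H>))\<^sup>2"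
proof -
  let ?h = "Max ((\<lambda>H. card (verts H)) ` \<H>)"
  obtain H Ps where H: "H \<in> \<H>" and W: "witnessing H Ps Hs"
    and short: "\<forall>P\<in>set Ps. path_len P \<le> p - 1"
    using assms(4) by (auto simp: H_minus_def)
  have "finite (verts H)"
    using assms(2) H by (simp add: is_digraph_def)
  then have "card (verts Hs) \<le> card (verts H) + (p - 1) * (card (verts H))\<^sup>2"
    using card_verts_le_if_witnessing[OF W _ short] by simp
  moreover have "card (verts H) \<le> ?h"
    using assms(1) H by simp
  ultimately show ?thesis
    by (meson add_mono le_trans mult_le_mono2 power_mono zero_le)
qed

end
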